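(* Let $\mathcal{C}\subset\mathbb{R}^n$ be a nonempty compact convex set with Euclidean diameter $D$, let $f$ be continuously differentiable with $\nabla f$ $L$-Lipschitz on $\mathcal{C}$, $f^\star=\min_{\mathcal{C}}f$, $F_0=f(x^0)-f^\star$. Assume the stochastic gradients are unbiased with variance bounded by $\sigma^2$ (see context). Let $\{x^t\}_{t=0}^T$ ($T\ge1$) be generated by the Boosted Stochastic Frank–Wolfe algorithm described in the context with the Heavy Ball estimator, where for all $t$, $\eta_t=\frac{1}{(t+2)^{3/4}}$ and $\tilde\rho_t=\frac{1}{\sqrt{t+1}}$. Let $M_h=\max\{\|\Delta^0\|^2,\ 24(\sigma^2+2L^2D^2)\}$, with $\Delta^0=m^0-\nabla f(x^0)$. Then $$\mathbb{E}\Big[\min_{0\le t\le T-1}\mathrm{Gap}(x^t)\Big]\le\frac{F_0+2D\sqrt{M_h}\,(1+\ln T)+LD^2}{4\big((T+2)^{1/4}-2^{1/4}\big)}.$$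
   Context: Euclidean norms; $D=\max_{x,y\in\mathcal{C}}\|x-y\|$; $\mathrm{Gap}(x)=\max_{s\in\mathcal{C}}\langle\nabla f(x),x-s\rangle$. $\mathrm{lmo}(v)$ denotes a (fixed selection of a) point of $\arg\min_{s\in\mathcal{C}}\langle s,v\rangle$. $\mathrm{align}(d,\hat d)=\frac{\langle d,\hat d\rangle}{\|d\|\|\hat d\|}$ if $\hat d\ne0$, $-1$ if $\hat d=0$. $\mathbb{E}$ full expectation; $\mathbb{E}_t[\cdot]=\mathbb{E}[\cdot\mid\sigma(x^0,\dots,x^t)]$. Heavy Ball estimator: at iteration $t$ a sample $\xi_t$ is drawn and a stochastic gradient $\tilde\nabla f(x^t,\xi_t)$ computed, with $\mathbb{E}_{t-1}[\tilde\nabla f(x^t,\xi_t)]=\nabla f(x^t)$ and $\mathbb{E}\|\tilde\nabla f(x,\xi)-\nabla f(x)\|^2\le\sigma^2$ for all $x$; the estimator is $m^0=0$ and $m^t=(1-\tilde\rho_t)m^{t-1}+\tilde\rho_t\tilde\nabla f(x^t,\xi_t)$ for $t\ge1$. Algorithm: inputs $K\ge1$, $\delta\in(0,1]$, step decays $\eta_t>0$, a vector $m^{\rm init}$; $x^0=\mathrm{lmo}(m^{\rm init})$. At iteration $t$ the estimator $m^t$ is formed. Boosting: $\psi^0=0$, $\Lambda_t=0$, $k=0$; while $k\le K-1$: $r^k=-m^t-\psi^k$, $v^k=\mathrm{lmo}(-r^k)$; if $k=0$, $s^t=v^0$; if $\psi^k\ne0$, $u^k$ is whichever of $v^k-x^t$,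 $-\psi^k/\|\psi^k\|$ has the larger inner product with $r^k$, else $u^k=v^k-x^t$; if $u^k=0$ stop; $\lambda_k=\langle r^k,u^k\rangle/\|u^k\|^2$, $\phi^k=\psi^k+\lambda_ku^k$; if $\mathrm{align}(-m^t,\phi^k)-\mathrm{align}(-m^t,\psi^k)\ge\delta$ then $\psi^{k+1}=\phi^k$, $\Lambda_t\leftarrow\Lambda_t+\lambda_k$ if $u^k=v^k-x^t$ and $\Lambda_t\leftarrow\Lambda_t(1-\lambda_k/\|\psi^k\|)$ otherwise, $k\leftarrow k+1$; else stop. With $\psi$ the last accepted candidate, $\tilde d^t=\psi/\Lambda_t$ if $\Lambda_t\ne0$, else $0$. $\gamma_t=\min\{\eta_t\|s^t-x^t\|/\|\tilde d^t\|,1\}$ if $\tilde d^t\ne0$, else $1$. If $\gamma_t<1$: $x^{t+1}=x^t+\gamma_t\tilde d^t$; otherwise $x^{t+1}=x^t+\eta_t(s^t-x^t)$. *)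

theory Defs
  imports "HOL-Probability.Probability"
begin

definition align :: "'v::real_inner \<Rightarrow> 'v \<Rightarrow> real" where
  "align d dh = (if dh \<noteq> 0 then inner d dh / (norm d * norm dh) else -1)"

definition fw_gap :: "'v::real_inner set \<Rightarrow> ('v \<Rightarrow> 'v) \<Rightarrow> 'v \<Rightarrow> real" where
  "fw_gap C grad x = (SUP s\<in>C. inner (grad x) (x - s))"

primrec boost_loop :: "('v::real_inner \<Rightarrow> 'v) \<Rightarrow> real \<Rightarrow> 'v \<Rightarrow> 'v \<Rightarrow> nat \<Rightarrow> 'v \<Rightarrow> real \<Rightarrow> 'v \<times> real" where
  "boost_loop lmo \<delta> m x 0 \<psi> \<Lambda> = (\<psi>, \<Lambda>)"
| "boost_loop lmo \<delta> m x (Suc n) \<psi> \<Lambda> =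
     (let r = - m - \<psi>;
          v = lmo (- r);
          vert = (\<psi> = 0 \<or> inner r (v - x) \<ge> inner r (- (\<psi> /\<^sub>R norm \<psi>)));
          u = (if vert then v - x else - (\<psi> /\<^sub>R norm \<psi>))
      in if u = 0 then (\<psi>, \<Lambda>)
         else (let lam = inner r u / (norm u)\<^sup>2;
                   \<phi> = \<psi> + lam *\<^sub>R u
               in if align (- m) \<phi> - align (- m) \<psi> \<ge> \<delta>
                  then boost_loop lmo \<delta> m x n \<phi>
                         (if vert then \<Lambda> + lam else \<Lambda> * (1 - lam / norm \<psi>))
                  else (\<psi>, \<Lambda>)))"

definition boost_dir :: "('v::real_inner \<Rightarrow> 'v) \<Rightarrow> nat \<Rightarrow> real \<Rightarrow> 'v \<Rightarrow> 'v \<Rightarrow> 'v" where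
  "boost_dir lmo K \<delta> m x =
     (case boost_loop lmo \<delta> m x K 0 0 of (\<psi>, \<Lambda>) \<Rightarrow> if \<Lambda> \<noteq> 0 then \<psi> /\<^sub>R \<Lambda> else 0)"

definition bfw_step :: "('v::real_inner \<Rightarrow> 'v) \<Rightarrow> nat \<Rightarrow> real \<Rightarrow> real \<Rightarrow> 'v \<Rightarrow> 'v \<Rightarrow> 'v" where
  "bfw_step lmo K \<delta> eta m x =
     (let s = lmo m;
          d = boost_dir lmo K \<delta> m x;
          \<gamma> = (if d \<noteq> 0 then min (eta * norm (s - x) / norm d) 1 else 1)
      in if \<gamma> < 1 then x + \<gamma> *\<^sub>R d else x + eta *\<^sub>R (s - x))"

text \<open>Boosted stochastic Frank-Wolfe with the Heavy Ball estimator.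
  bsfw lmo K delta eta rho minit g t = (x^t, m^t), where g t y is the stochastic
  gradient at y computed with the sample drawn at iteration t.\<close>
fun bsfw :: "('v::real_inner \<Rightarrow> 'v) \<Rightarrow> nat \<Rightarrow> real \<Rightarrow> (nat \<Rightarrow> real) \<Rightarrow> (nat \<Rightarrow> real) \<Rightarrow> 'v
               \<Rightarrow> (nat \<Rightarrow> 'v \<Rightarrow> 'v) \<Rightarrow> nat \<Rightarrow> 'v \<times> 'v" where
  "bsfw lmo K \<delta> eta rho minit g 0 = (lmo minit, 0)"
| "bsfw lmo K \<delta> eta rho minit g (Suc t) =
     (case bsfw lmo K \<delta> eta rho minit g t of (x, m) \<Rightarrow>
        let x' = bfw_step lmo K \<delta> (eta t) m x
        in (x', (1 - rho (Suc t)) *\<^sub>R m + rho (Suc t) *\<^sub>R g (Suc t) x'))"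

end

theory Submission
  imports Defs
begin

text \<open>A boosted step \<open>x + \<gamma> d\<close> has the same length \<open>\<eta>\<^sub>t \<parallel>s\<^sup>t - x\<^sup>t\<parallel>\<close> as the Frank-Wolfe step, stays in
  \<open>C\<close>, and is at least as well aligned with \<open>-m\<^sup>t\<close> as \<open>s\<^sup>t - x\<^sup>t\<close>: during boosting \<open>x + \<psi>/\<Lambda>\<close> moves
  along convex combinations of \<open>x\<close> and vertices, because a step along \<open>-\<psi>\<close> only rescales \<open>\<psi>\<close> and can
  never gain \<open>\<delta>\<close> of alignment. Hence the Frank-Wolfe descent inequality survives boosting,
  \<open>\<eta>\<^sub>t Gap(x\<^sup>t) \<le> f(x\<^sup>t) - f(x\<^sup>t\<^sup>+\<^sup>1) + 2 \<eta>\<^sub>t D \<parallel>\<Delta>\<^sup>t\<parallel> + L \<eta>\<^sub>t\<^sup>2 D\<^sup>2 / 2\<close>,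
  and summing it reduces the theorem to \<open>E \<parallel>\<Delta>\<^sup>t\<parallel> \<le> sqrt (M\<^sub>h \<rho>\<^sub>t)\<close>. As the sample \<open>\<xi>\<^sub>t\<^sub>+\<^sub>1\<close> is
  independent of the past, the Heavy Ball update gives
  \<open>E \<parallel>\<Delta>\<^sup>t\<^sup>+\<^sup>1\<parallel>\<^sup>2 \<le> (1 - \<rho>\<^sub>t\<^sub>+\<^sub>1) E \<parallel>\<Delta>\<^sup>t\<parallel>\<^sup>2 + \<rho>\<^sub>t\<^sub>+\<^sub>1\<^sup>2 (L\<^sup>2 D\<^sup>2 + \<sigma>\<^sup>2)\<close>
  (Young's inequality together with \<open>\<eta>\<^sub>t\<^sup>2 = \<rho>\<^sub>t\<^sub>+\<^sub>1\<^sup>3\<close>), and \<open>E \<parallel>\<Delta>\<^sup>t\<parallel>\<^sup>2 \<le> M\<^sub>h \<rho>\<^sub>t\<close> follows by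
  induction. Finally \<open>\<Sum> \<eta>\<^sub>t \<ge> 4 ((T + 2)\<^sup>1\<^sup>/\<^sup>4 - 2\<^sup>1\<^sup>/\<^sup>4)\<close>, \<open>\<Sum> \<eta>\<^sub>t\<^sup>2 \<le> 2\<close> and
  \<open>\<Sum> \<eta>\<^sub>t sqrt \<rho>\<^sub>t \<le> 1 + ln T\<close>.\<close>

section \<open>Measurability of the algorithm\<close>

lemma measurable_curried_app:
  assumes "(\<lambda>(x, z). G x z) \<in> borel_measurable (borel \<Otimes>\<^sub>M S)"
    and "a \<in> borel_measurable N" and "b \<in> measurable N S"
  shows "(\<lambda>p. G (a p) (b p)) \<in> borel_measurable N"
  using measurable_compose[OF measurable_Pair[OF assms(2,3)] assms(1)] by simp

lemma measurable_align[measurable]: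
  fixes d dh :: "'a \<Rightarrow> 'v::euclidean_space"
  assumes [measurable]: "d \<in> borel_measurable N" "dh \<in> borel_measurable N"
  shows "(\<lambda>\<omega>. align (d \<omega>) (dh \<omega>)) \<in> borel_measurable N"
  unfolding align_def by measurable

lemma measurable_boost_loop:
  fixes lmo :: "'v::euclidean_space \<Rightarrow> 'v"
  assumes [measurable]: "lmo \<in> borel_measurable borel"
    and "m \<in> borel_measurable N" "x \<in> borel_measurable N"
    and "\<psi> \<in> borel_measurable N" "\<Lambda> \<in> borel_measurable N"
  shows "(\<lambda>\<omega>. boost_loop lmo \<delta> (m \<omega>) (x \<omega>) n (\<psi> \<omega>) (\<Lambda> \<omega>)) \<in> measurable N (borel \<Otimes>\<^sub>M borel)"
  using assms(2-)
proof (induction n arbitrary: \<psi> \<Lambda>)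
  case (Suc n)
  note [measurable] = Suc.prems and Suc.IH[measurable]
  show ?case unfolding boost_loop.simps Let_def by measurable
qed simp

lemma measurable_bfw_step[measurable]:
  fixes lmo :: "'v::euclidean_space \<Rightarrow> 'v"
  assumes [measurable]: "lmo \<in> borel_measurable borel"
    and [measurable]: "m \<in> borel_measurable N" "x \<in> borel_measurable N"
  shows "(\<lambda>\<omega>. bfw_step lmo K \<delta> eta (m \<omega>) (x \<omega>)) \<in> borel_measurable N"
proof -
  have [measurable]: "(\<lambda>\<omega>. boost_loop lmo \<delta> (m \<omega>) (x \<omega>) K 0 0) \<in> measurable N (borel \<Otimes>\<^sub>M borel)"
    by (rule measurable_boost_loop) auto
  show ?thesis unfolding bfw_step_def boost_dir_def case_prod_beta Let_def by measurable
qed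

lemma measurable_bsfw:
  fixes lmo :: "'v::euclidean_space \<Rightarrow> 'v" and G :: "'v \<Rightarrow> 's \<Rightarrow> 'v"
  assumes [measurable]: "lmo \<in> borel_measurable borel"
    and G: "(\<lambda>(x, z). G x z) \<in> borel_measurable (borel \<Otimes>\<^sub>M S)"
    and "{..t} \<subseteq> I"
  shows "(\<lambda>h. bsfw lmo K \<delta> eta rho minit (\<lambda>t y. G y (h t)) t)
           \<in> measurable (Pi\<^sub>M I (\<lambda>_. S)) (borel \<Otimes>\<^sub>M borel)"
  using \<open>{..t} \<subseteq> I\<close>
proof (induction t)
  case (Suc t)
  then have [measurable]: "(\<lambda>h. bsfw lmo K \<delta> eta rho minit (\<lambda>t y. G y (h t)) t)
      \<in> measurable (Pi\<^sub>M I (\<lambda>_. S)) (borel \<Otimes>\<^sub>M borel)"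
    by force
  have "Suc t \<in> I" using Suc.prems by auto
  then have [measurable]: "(\<lambda>h. h (Suc t)) \<in> measurable (Pi\<^sub>M I (\<lambda>_. S)) S"
    by measurable
  note measurable_curried_app[OF G, measurable]
  show ?case unfolding bsfw.simps case_prod_beta Let_def by measurable
qed simp

lemma bsfw_cong:
  assumes "\<And>i. i \<le> t \<Longrightarrow> g i = g' i"
  shows "bsfw lmo K \<delta> eta rho minit g t = bsfw lmo K \<delta> eta rho minit g' t"
  using assms by (induction t) (simp_all add: case_prod_beta Let_def)

section \<open>Geometry of a boosted step\<close>

lemma align_ge_minus_one: "align d dh \<ge> -1"
proof (cases "dh = 0")
  case False
  have "- (norm d * norm dh) \<le> inner d dh"
    using Cauchy_Schwarz_ineq2[of d dh] by linarith
  then show ?thesis using False unfolding align_def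
    by (cases "d = 0") (auto simp: field_simps)
qed (simp add: align_def)

lemma align_zero [simp]: "align d 0 = -1"
  by (simp add: align_def)

lemma align_scaleR_pos: "c > 0 \<Longrightarrow> align d (c *\<^sub>R dh) = align d dh"
  by (cases "dh = 0") (auto simp: align_def)

lemma align_scaleR_neg: "c < 0 \<Longrightarrow> dh \<noteq> 0 \<Longrightarrow> align d (c *\<^sub>R dh) = - align d dh"
  by (auto simp: align_def abs_if divide_simps)

lemma align_scaleR_no_gain:
  assumes "align d dh \<ge> 0" and "\<delta> > 0"
  shows "\<not> \<delta> \<le> align d (c *\<^sub>R dh) - align d dh"
  using assms
  by (cases c "0::real" rule: linorder_cases; cases "dh = 0")
    (auto simp: align_scaleR_pos align_scaleR_neg)

lemma inner_div_norm_le_of_align_le: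
  assumes "align d a \<le> align d b" and "a \<noteq> 0" and "b \<noteq> 0"
  shows "inner d a / norm a \<le> inner d b / norm b"
proof (cases "d = 0")
  case False
  then have "norm d * (inner d a / (norm d * norm a)) \<le> norm d * (inner d b / (norm d * norm b))"
    using assms unfolding align_def by (intro mult_left_mono) auto
  with False show ?thesis by simp
qed simp

lemma convex_rescaled_step_in:
  fixes x \<psi> v :: "'v::real_vector"
  assumes "convex C" and "\<Lambda> > 0" and "lam \<ge> 0"
    and "x + (1 / \<Lambda>) *\<^sub>R \<psi> \<in> C" and "v \<in> C"
  shows "x + (1 / (\<Lambda> + lam)) *\<^sub>R (\<psi> + lam *\<^sub>R (v - x)) \<in> C"
proof -
  have pos: "\<Lambda> + lam \<noteq> 0" using assms by simp
  have "(\<Lambda> + lam) *\<^sub>R (x + (1 / (\<Lambda> + lam)) *\<^sub>R (\<psi> + lam *\<^sub>R (v - x))) = \<Lambda> *\<^sub>R x + \<psi> + lam *\<^sub>R v"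
    using pos by (simp add: scaleR_add_right scaleR_diff_right scaleR_add_left)
  moreover have "(\<Lambda> + lam) *\<^sub>R ((\<Lambda> / (\<Lambda> + lam)) *\<^sub>R (x + (1 / \<Lambda>) *\<^sub>R \<psi>) + (lam / (\<Lambda> + lam)) *\<^sub>R v)
      = \<Lambda> *\<^sub>R x + \<psi> + lam *\<^sub>R v"
    using pos assms by (simp add: scaleR_add_right)
  ultimately have "x + (1 / (\<Lambda> + lam)) *\<^sub>R (\<psi> + lam *\<^sub>R (v - x))
      = (\<Lambda> / (\<Lambda> + lam)) *\<^sub>R (x + (1 / \<Lambda>) *\<^sub>R \<psi>) + (lam / (\<Lambda> + lam)) *\<^sub>R v"
    using pos by (metis scaleR_cancel_left)
  also have "\<dots> \<in> C"
    using assms by (intro convexD) (auto simp: add_divide_distrib[symmetric])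
  finally show ?thesis .
qed

locale fw_setting =
  fixes C :: "'v::euclidean_space set" and lmo :: "'v \<Rightarrow> 'v"
  assumes convex_C: "convex C" and bounded_C: "bounded C"
    and lmo_in: "\<And>v. lmo v \<in> C"
    and lmo_le: "\<And>v s. s \<in> C \<Longrightarrow> inner (lmo v) v \<le> inner s v"
begin

lemma inner_lmo_diff_nonneg: "x \<in> C \<Longrightarrow> inner (- v) (lmo v - x) \<ge> 0"
  using lmo_le[of x v] by (simp add: inner_diff_right inner_commute)

lemma align_fw_dir_nonneg: "x \<in> C \<Longrightarrow> lmo m \<noteq> x \<Longrightarrow> align (- m) (lmo m - x) \<ge> 0"
  using inner_lmo_diff_nonneg[of x m] unfolding align_def by (simp add: divide_nonpos_nonneg)

lemma dist_le_diameter: "x \<in> C \<Longrightarrow> y \<in> C \<Longrightarrow> norm (x - y) \<le> diameter C"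
  using diameter_bounded_bound[OF bounded_C] by (simp add: dist_norm)

definition boost_invariant :: "'v \<Rightarrow> 'v \<Rightarrow> 'v \<Rightarrow> real \<Rightarrow> bool" where
  "boost_invariant m x \<psi> \<Lambda> \<longleftrightarrow> (\<psi> = 0 \<and> \<Lambda> = 0) \<or>
     (lmo m \<noteq> x \<and> \<Lambda> > 0 \<and> \<psi> \<noteq> 0 \<and> x + (1 / \<Lambda>) *\<^sub>R \<psi> \<in> C
      \<and> align (- m) (lmo m - x) \<le> align (- m) \<psi>)"

lemma boost_invariant_align_nonneg:
  assumes "boost_invariant m x \<psi> \<Lambda>" and "x \<in> C" and "\<psi> \<noteq> 0"
  shows "align (- m) \<psi> \<ge> 0"
  using assms align_fw_dir_nonneg[of x m] by (auto simp: boost_invariant_def)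

lemma boost_invariant_vertex_step:
  assumes "boost_invariant m x \<psi> \<Lambda>" and "\<psi> \<noteq> 0" and "v \<in> C" and "lam \<ge> 0"
    and "align (- m) \<psi> < align (- m) (\<psi> + lam *\<^sub>R (v - x))"
  shows "boost_invariant m x (\<psi> + lam *\<^sub>R (v - x)) (\<Lambda> + lam)"
proof -
  have inv: "lmo m \<noteq> x" "\<Lambda> > 0" "x + (1 / \<Lambda>) *\<^sub>R \<psi> \<in> C"
      "align (- m) (lmo m - x) \<le> align (- m) \<psi>"
    using assms(1,2) by (auto simp: boost_invariant_def)
  have "\<psi> + lam *\<^sub>R (v - x) \<noteq> 0"
    using assms(5) align_ge_minus_one[of "- m" \<psi>] by auto
  then show ?thesis
    using inv assms(4,5) convex_rescaled_step_in[OF convex_C inv(2) assms(4) inv(3) assms(3)]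
    by (auto simp: boost_invariant_def)
qed

text \<open>A step along \<open>-\<psi>\<close> only rescales \<open>\<psi>\<close> and is therefore never accepted: every accepted
  step is a vertex step.\<close>
lemma boost_round_invariant:
  assumes inv: "boost_invariant m x \<psi> \<Lambda>" and xC: "x \<in> C" and \<delta>: "\<delta> > 0"
  obtains "boost_loop lmo \<delta> m x (Suc n) \<psi> \<Lambda> = (\<psi>, \<Lambda>)"
    | \<phi> \<Lambda>' where "boost_loop lmo \<delta> m x (Suc n) \<psi> \<Lambda> = boost_loop lmo \<delta> m x n \<phi> \<Lambda>'"
        "boost_invariant m x \<phi> \<Lambda>'"
proof -
  define r where "r = - m - \<psi>"
  define v where "v = lmo (- r)"
  define vert where "vert = (\<psi> = 0 \<or> inner r (v - x) \<ge> inner r (- (\<psi> /\<^sub>R norm \<psi>)))"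
  define u where "u = (if vert then v - x else - (\<psi> /\<^sub>R norm \<psi>))"
  define lam where "lam = inner r u / (norm u)\<^sup>2"
  define \<phi> where "\<phi> = \<psi> + lam *\<^sub>R u"
  define \<Lambda>' where "\<Lambda>' = (if vert then \<Lambda> + lam else \<Lambda> * (1 - lam / norm \<psi>))"
  have loop: "boost_loop lmo \<delta> m x (Suc n) \<psi> \<Lambda> =
     (if u = 0 then (\<psi>, \<Lambda>) else if align (- m) \<phi> - align (- m) \<psi> \<ge> \<delta>
        then boost_loop lmo \<delta> m x n \<phi> \<Lambda>' else (\<psi>, \<Lambda>))"
    unfolding boost_loop.simps Let_def r_def[symmetric] v_def[symmetric] vert_def[symmetric]
      u_def[symmetric] lam_def[symmetric] \<phi>_def[symmetric] \<Lambda>'_def[symmetric] by simp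
  consider (stop) "boost_loop lmo \<delta> m x (Suc n) \<psi> \<Lambda> = (\<psi>, \<Lambda>)"
    | (accept) "boost_loop lmo \<delta> m x (Suc n) \<psi> \<Lambda> = boost_loop lmo \<delta> m x n \<phi> \<Lambda>'"
        "align (- m) \<phi> - align (- m) \<psi> \<ge> \<delta>"
    using loop by (auto split: if_splits)
  then show thesis
  proof cases
    case accept
    have \<phi>0: "\<phi> \<noteq> 0"
      using accept(2) align_ge_minus_one[of "- m" \<psi>] \<delta> by auto
    have lam_vert: "lam \<ge> 0" if vert
      using inner_lmo_diff_nonneg[OF xC, of "- r"] that by (simp add: lam_def u_def v_def)
    have "boost_invariant m x \<phi> \<Lambda>'"
    proof (cases "\<psi> = 0")
      case True
      then have "\<Lambda> = 0" and vert and "v = lmo m"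
        using inv by (auto simp: boost_invariant_def vert_def v_def r_def)
      then have "\<phi> = lam *\<^sub>R (lmo m - x)" "\<Lambda>' = lam" "lam > 0"
        using True \<phi>0 lam_vert by (auto simp: \<phi>_def u_def \<Lambda>'_def)
      then show ?thesis
        using \<phi>0 lmo_in by (auto simp: boost_invariant_def align_scaleR_pos)
    next
      case False
      have vert
      proof (rule ccontr)
        assume "\<not> vert"
        then have "\<phi> = (1 - lam / norm \<psi>) *\<^sub>R \<psi>"
          using False by (simp add: \<phi>_def u_def scaleR_diff_left divide_inverse)
        then show False
          using align_scaleR_no_gain[OF boost_invariant_align_nonneg[OF inv xC False] \<delta>] accept(2)
          by simp
      qed
      then show ?thesis
        using boost_invariant_vertex_step[OF inv False lmo_in lam_vert] accept(2) \<delta>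
        by (simp add: \<phi>_def u_def \<Lambda>'_def v_def)
    qed
    then show thesis using accept(1) that(2) by blast
  qed (rule that(1))
qed

lemma boost_loop_invariant:
  assumes "boost_invariant m x \<psi> \<Lambda>" and "x \<in> C" and "\<delta> > 0"
  shows "case boost_loop lmo \<delta> m x n \<psi> \<Lambda> of (\<psi>', \<Lambda>') \<Rightarrow> boost_invariant m x \<psi>' \<Lambda>'"
  using assms(1)
proof (induction n arbitrary: \<psi> \<Lambda>)
  case 0
  then show ?case by simp
next
  case (Suc n)
  from boost_round_invariant[OF Suc.prems assms(2,3), of n] Suc.IH Suc.prems show ?case
    by (metis case_prod_conv)
qed

lemma boost_dir_cases:
  fixes K :: nat and m :: 'v
  assumes "x \<in> C" and "\<delta> > 0"
  defines "d \<equiv> boost_dir lmo K \<delta> m x"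
  shows "d = 0 \<or> (lmo m \<noteq> x \<and> x + d \<in> C \<and> align (- m) (lmo m - x) \<le> align (- m) d)"
proof -
  obtain \<psi> \<Lambda> where loop: "boost_loop lmo \<delta> m x K 0 0 = (\<psi>, \<Lambda>)"
    by (cases "boost_loop lmo \<delta> m x K 0 0")
  then have inv: "boost_invariant m x \<psi> \<Lambda>"
    using boost_loop_invariant[OF _ assms(1,2), of m 0 0 K] by (simp add: boost_invariant_def)
  have d: "d = (if \<Lambda> \<noteq> 0 then (1 / \<Lambda>) *\<^sub>R \<psi> else 0)"
    by (simp add: d_def boost_dir_def loop divide_inverse_commute)
  show ?thesis
    using inv by (auto simp: d boost_invariant_def align_scaleR_pos)
qed

lemma
  fixes K :: nat and m :: 'v
  assumes xC: "x \<in> C" and \<delta>: "\<delta> > 0" and eta: "0 \<le> eta" "eta \<le> 1"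
  defines "x' \<equiv> bfw_step lmo K \<delta> eta m x"
  shows bfw_step_in: "x' \<in> C"
    and bfw_step_dist_le: "norm (x' - x) \<le> eta * norm (lmo m - x)"
    and bfw_step_inner_le: "inner m (x' - x) \<le> eta * inner m (lmo m - x)"
proof -
  define s where "s = lmo m"
  define d where "d = boost_dir lmo K \<delta> m x"
  define \<gamma> where "\<gamma> = (if d \<noteq> 0 then min (eta * norm (s - x) / norm d) 1 else 1)"
  have x': "x' = (if \<gamma> < 1 then x + \<gamma> *\<^sub>R d else x + eta *\<^sub>R (s - x))"
    unfolding x'_def bfw_step_def Let_def s_def[symmetric] d_def[symmetric] \<gamma>_def[symmetric] ..
  have "x' \<in> C \<and> norm (x' - x) \<le> eta * norm (s - x) \<and> inner m (x' - x) \<le> eta * inner m (s - x)"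
  proof (cases "\<gamma> < 1")
    case False
    have "x + eta *\<^sub>R (s - x) = (1 - eta) *\<^sub>R x + eta *\<^sub>R s"
      by (simp add: algebra_simps)
    also have "\<dots> \<in> C"
      using eta xC lmo_in by (intro convexD[OF convex_C]) (auto simp: s_def)
    finally show ?thesis using False eta by (simp add: x')
  next
    case True
    then have d0: "d \<noteq> 0" and \<gamma>: "\<gamma> = eta * norm (s - x) / norm d"
      by (auto simp: \<gamma>_def min_def split: if_splits)
    then have dir: "s \<noteq> x" "x + d \<in> C" "align (- m) (s - x) \<le> align (- m) d"
      using boost_dir_cases[OF xC \<delta>, of K m] by (auto simp: d_def s_def)
    have \<gamma>0: "0 \<le> \<gamma>" using \<gamma> eta by simp
    have "x + \<gamma> *\<^sub>R d = (1 - \<gamma>) *\<^sub>R x + \<gamma> *\<^sub>R (x + d)"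
      by (simp add: algebra_simps)
    also have "\<dots> \<in> C"
      using \<gamma>0 True xC dir(2) by (intro convexD[OF convex_C]) auto
    finally have "x' \<in> C" using True by (simp add: x')
    moreover have "norm (x' - x) = eta * norm (s - x)"
      using True \<gamma> \<gamma>0 d0 eta by (simp add: x')
    txt \<open>Same length as the Frank-Wolfe step, better alignment with \<open>-m\<close>.\<close>
    moreover have "eta * norm (s - x) * (inner (- m) (s - x) / norm (s - x))
        \<le> eta * norm (s - x) * (inner (- m) d / norm d)"
      using inner_div_norm_le_of_align_le[OF dir(3)] dir(1) d0 eta by (intro mult_left_mono) auto
    then have "inner m (x' - x) \<le> eta * inner m (s - x)"
      using True dir(1) \<gamma> by (simp add: x')
    ultimately show ?thesis by simp
  qed
  then show "x' \<in> C" "norm (x' - x) \<le> eta * norm (lmo m - x)"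
    "inner m (x' - x) \<le> eta * inner m (lmo m - x)"
    by (simp_all add: s_def)
qed

lemma fw_gap_eq: "fw_gap C grad x = inner (grad x) (x - lmo (grad x))"
  unfolding fw_gap_def
proof (rule cSup_eq_maximum)
  show "inner (grad x) (x - lmo (grad x)) \<in> (\<lambda>s. inner (grad x) (x - s)) ` C"
    using lmo_in by blast
qed (use lmo_le in \<open>auto simp: inner_diff_right inner_commute\<close>)

lemma fw_gap_nonneg: "x \<in> C \<Longrightarrow> fw_gap C grad x \<ge> 0"
  using inner_lmo_diff_nonneg[of x "grad x"] by (simp add: fw_gap_eq inner_diff_right)

lemma fw_gap_le:
  assumes "x \<in> C"
  shows "fw_gap C grad x \<le> inner m (x - lmo m) + norm (grad x - m) * diameter C"
proof -
  define s where "s = lmo (grad x)"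
  have "inner m (x - s) \<le> inner m (x - lmo m)"
    using lmo_le[of s m] lmo_in by (simp add: s_def inner_diff_right inner_commute)
  moreover have "inner (grad x - m) (x - s) \<le> norm (grad x - m) * diameter C"
    using order_trans[OF norm_cauchy_schwarz mult_left_mono[OF dist_le_diameter[OF assms lmo_in] norm_ge_zero]]
    by (simp add: s_def)
  ultimately show ?thesis
    by (simp add: fw_gap_eq s_def[symmetric] inner_diff_left)
qed

end

section \<open>One step of boosted Frank-Wolfe on a smooth function\<close>

lemma descent_lemma:
  fixes f :: "'v::real_inner \<Rightarrow> real"
  assumes "convex C"
    and deriv: "\<And>x. (f has_derivative (\<lambda>h. inner (grad x) h)) (at x)"
    and lip: "\<And>x y. x \<in> C \<Longrightarrow> y \<in> C \<Longrightarrow> norm (grad x - grad y) \<le> L * norm (x - y)"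
    and xC: "x \<in> C" and yC: "y \<in> C"
  shows "f y \<le> f x + inner (grad x) (y - x) + L / 2 * (norm (y - x))\<^sup>2"
proof -
  define h where "h = y - x"
  define \<phi> where "\<phi> \<tau> = f (x + \<tau> *\<^sub>R h) - \<tau> * inner (grad x) h - L / 2 * \<tau>\<^sup>2 * (norm h)\<^sup>2" for \<tau>
  have "\<phi> 1 \<le> \<phi> 0"
  proof (rule DERIV_nonpos_imp_nonincreasing[of 0 1])
    fix \<tau> :: real
    assume \<tau>: "0 \<le> \<tau>" "\<tau> \<le> 1"
    have "x + \<tau> *\<^sub>R h = (1 - \<tau>) *\<^sub>R x + \<tau> *\<^sub>R y"
      by (simp add: h_def algebra_simps)
    then have zC: "x + \<tau> *\<^sub>R h \<in> C"
      using convexD[OF \<open>convex C\<close> xC yC, of "1 - \<tau>" \<tau>] \<tau> by simp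
    have "((\<lambda>\<tau>. f (x + \<tau> *\<^sub>R h)) has_derivative (\<lambda>s. inner (grad (x + \<tau> *\<^sub>R h)) (s *\<^sub>R h))) (at \<tau>)"
      by (rule has_derivative_compose[OF _ deriv]) (auto intro!: derivative_eq_intros)
    then have "((\<lambda>\<tau>. f (x + \<tau> *\<^sub>R h)) has_field_derivative inner (grad (x + \<tau> *\<^sub>R h)) h) (at \<tau>)"
      by (rule has_derivative_imp_has_field_derivative) simp
    then have "(\<phi> has_field_derivative
        inner (grad (x + \<tau> *\<^sub>R h) - grad x) h - L * \<tau> * (norm h)\<^sup>2) (at \<tau>)"
      unfolding \<phi>_def by (auto intro!: derivative_eq_intros simp: inner_diff_left)
    moreover have "inner (grad (x + \<tau> *\<^sub>R h) - grad x) h \<le> L * \<tau> * (norm h)\<^sup>2"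
    proof -
      have "inner (grad (x + \<tau> *\<^sub>R h) - grad x) h \<le> norm (grad (x + \<tau> *\<^sub>R h) - grad x) * norm h"
        by (rule norm_cauchy_schwarz)
      also have "\<dots> \<le> (L * norm (\<tau> *\<^sub>R h)) * norm h"
        using lip[OF zC xC] by (intro mult_right_mono) auto
      finally show ?thesis using \<tau> by (simp add: power2_eq_square)
    qed
    ultimately show "\<exists>y. (\<phi> has_real_derivative y) (at \<tau>) \<and> y \<le> 0"
      by (intro exI[where x = "inner (grad (x + \<tau> *\<^sub>R h) - grad x) h - L * \<tau> * (norm h)\<^sup>2"]) simp
  qed simp
  then show ?thesis unfolding \<phi>_def h_def by simp
qed

locale smooth_fw_setting = fw_setting C lmo
  for C :: "'v::euclidean_space set" and lmo :: "'v \<Rightarrow> 'v" +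
  fixes f :: "'v \<Rightarrow> real" and grad :: "'v \<Rightarrow> 'v" and L :: real
  assumes has_grad: "\<And>x. (f has_derivative (\<lambda>h. inner (grad x) h)) (at x)"
    and grad_lipschitz: "\<And>x y. x \<in> C \<Longrightarrow> y \<in> C \<Longrightarrow> norm (grad x - grad y) \<le> L * norm (x - y)"
    and L_nonneg: "L \<ge> 0"
begin

lemma bfw_step_descent:
  fixes K :: nat and m :: 'v
  assumes xC: "x \<in> C" and \<delta>: "\<delta> > 0" and eta: "0 \<le> eta" "eta \<le> 1"
  defines "x' \<equiv> bfw_step lmo K \<delta> eta m x" and "D \<equiv> diameter C"
  shows "eta * fw_gap C grad x
           \<le> f x - f x' + 2 * eta * D * norm (m - grad x) + L / 2 * eta\<^sup>2 * D\<^sup>2"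
proof -
  have x'C: "x' \<in> C" and step: "norm (x' - x) \<le> eta * D"
    using bfw_step_in[OF xC \<delta> eta] bfw_step_dist_le[OF xC \<delta> eta] dist_le_diameter[OF lmo_in xC]
      eta(1) order_trans mult_left_mono unfolding x'_def D_def by blast+
  have "f x' \<le> f x + inner (grad x) (x' - x) + L / 2 * (norm (x' - x))\<^sup>2"
    by (rule descent_lemma[OF convex_C has_grad grad_lipschitz xC x'C])
  also have "L / 2 * (norm (x' - x))\<^sup>2 \<le> L / 2 * (eta * D)\<^sup>2"
    using step L_nonneg by (intro mult_left_mono power_mono) auto
  also have "inner (grad x) (x' - x) = inner m (x' - x) + inner (grad x - m) (x' - x)"
    by (simp add: inner_diff_left)
  also have "inner m (x' - x) \<le> eta * inner m (lmo m - x)"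
    unfolding x'_def by (rule bfw_step_inner_le[OF xC \<delta> eta])
  also have "inner (grad x - m) (x' - x) \<le> norm (m - grad x) * (eta * D)"
    using order_trans[OF norm_cauchy_schwarz mult_left_mono[OF step norm_ge_zero], of "grad x - m"]
    by (simp add: norm_minus_commute)
  also have "eta * inner m (lmo m - x) \<le> - eta * fw_gap C grad x + eta * norm (m - grad x) * D"
    using mult_left_mono[OF fw_gap_le[OF xC, of grad m] eta(1)]
    by (simp add: D_def inner_diff_right norm_minus_commute algebra_simps)
  finally show ?thesis by (simp add: power_mult_distrib algebra_simps)
qed

lemma sum_weighted_gap_le:
  fixes x m :: "nat \<Rightarrow> 'v" and eta :: "nat \<Rightarrow> real"
  assumes x0: "x 0 \<in> C" and xSuc: "\<And>t. x (Suc t) = bfw_step lmo K \<delta> (eta t) (m t) (x t)"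
    and \<delta>: "\<delta> > 0" and eta: "\<And>t. 0 \<le> eta t" "\<And>t. eta t \<le> 1"
  defines "D \<equiv> diameter C"
  shows "(\<Sum>t<T. eta t * fw_gap C grad (x t))
           \<le> f (x 0) - f (x T)
             + (\<Sum>t<T. 2 * eta t * D * norm (m t - grad (x t)) + L / 2 * (eta t)\<^sup>2 * D\<^sup>2)"
proof -
  have xC: "x t \<in> C" for t
    by (induction t) (simp_all add: x0 xSuc bfw_step_in[OF _ \<delta> eta])
  have "(\<Sum>t<T. eta t * fw_gap C grad (x t))
      \<le> (\<Sum>t<T. (f (x t) - f (x (Suc t)))
                + (2 * eta t * D * norm (m t - grad (x t)) + L / 2 * (eta t)\<^sup>2 * D\<^sup>2))"
  proof (rule sum_mono)
    fix t
    show "eta t * fw_gap C grad (x t) \<le> (f (x t) - f (x (Suc t)))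
        + (2 * eta t * D * norm (m t - grad (x t)) + L / 2 * (eta t)\<^sup>2 * D\<^sup>2)"
      using bfw_step_descent[OF xC \<delta> eta(1,2), of t t K "m t"] by (simp add: xSuc D_def)
  qed
  also have "\<dots> = f (x 0) - f (x T)
      + (\<Sum>t<T. 2 * eta t * D * norm (m t - grad (x t)) + L / 2 * (eta t)\<^sup>2 * D\<^sup>2)"
    using sum_lessThan_telescope'[of "\<lambda>t. f (x t)" T] by (simp add: sum.distrib)
  finally show ?thesis .
qed

end

section \<open>Step sizes\<close>

definition step_eta :: "nat \<Rightarrow> real" where
  "step_eta t = 1 / (real t + 2) powr (3/4)"

definition momentum_rho :: "nat \<Rightarrow> real" where
  "momentum_rho t = 1 / sqrt (real t + 1)"

lemma step_eta_pos: "step_eta t > 0"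
  by (simp add: step_eta_def)

lemma step_eta_le_one: "step_eta t \<le> 1"
  using ge_one_powr_ge_zero[of "real t + 2" "3/4"] by (simp add: step_eta_def)

lemma momentum_rho_pos: "momentum_rho t > 0"
  by (simp add: momentum_rho_def)

lemma momentum_rho_le_one: "momentum_rho t \<le> 1"
  by (simp add: momentum_rho_def)

lemma momentum_rho_0 [simp]: "momentum_rho 0 = 1"
  by (simp add: momentum_rho_def)

lemma step_eta_sq: "(step_eta t)\<^sup>2 = (momentum_rho (Suc t)) ^ 3"
proof -
  have "((real t + 2) powr (3/4))\<^sup>2 = ((real t + 2) powr (1/2)) ^ 3"
    by (simp add: powr_power)
  also have "\<dots> = (sqrt (real t + 2)) ^ 3"
    by (simp add: powr_half_sqrt)
  finally have "((real t + 2) powr (3/4))\<^sup>2 = (sqrt (real t + 2)) ^ 3" .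
  then show ?thesis
    by (simp add: step_eta_def momentum_rho_def power_divide add.commute)
qed

lemma quarter_root_diff_le:
  fixes a b :: real
  assumes "0 < a" and "a \<le> b"
  shows "4 * (b powr (1/4) - a powr (1/4)) \<le> (b - a) / a powr (3/4)"
proof -
  define p q where "p = a powr (1/4)" and "q = b powr (1/4)"
  have p0: "p > 0" and pq: "p \<le> q"
    using assms by (auto simp: p_def q_def powr_mono2)
  have "a = p ^ 4" "b = q ^ 4" "a powr (3/4) = p ^ 3"
    using assms by (simp_all add: p_def q_def powr_power)
  moreover have "p ^ 3 \<le> q ^ 3" "p ^ 3 \<le> q\<^sup>2 * p" "p ^ 3 \<le> q * p\<^sup>2"
    using pq p0 by (auto simp: power2_eq_square power3_eq_cube intro!: power_mono mult_mono)
  then have "(q - p) * (4 * p ^ 3) \<le> (q - p) * (q ^ 3 + q\<^sup>2 * p + q * p\<^sup>2 + p ^ 3)"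
    using pq by (intro mult_left_mono) auto
  ultimately show ?thesis
    using p0 by (simp add: p_def q_def field_simps) (simp add: algebra_simps power2_eq_square power3_eq_cube power4_eq_xxxx)
qed

lemma sum_step_eta_ge: "4 * ((real T + 2) powr (1/4) - 2 powr (1/4)) \<le> (\<Sum>t<T. step_eta t)"
proof -
  define g where "g t = (real t + 2) powr (1/4)" for t :: nat
  have "4 * ((real T + 2) powr (1/4) - 2 powr (1/4)) = (\<Sum>t<T. 4 * (g (Suc t) - g t))"
    by (simp only: sum_distrib_left[symmetric] sum_lessThan_telescope) (simp add: g_def)
  also have "\<dots> \<le> (\<Sum>t<T. step_eta t)"
    using quarter_root_diff_le[of "real t + 2" "real t + 3" for t]
    by (intro sum_mono) (simp add: g_def step_eta_def add.commute)
  finally show ?thesis .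
qed

lemma harm_le_one_plus_ln: "n \<ge> 1 \<Longrightarrow> harm n \<le> 1 + ln (real n)"
proof (induction n rule: dec_induct)
  case (step n)
  have "ln (real n / (real n + 1)) \<le> real n / (real n + 1) - 1"
    using step by (intro ln_le_minus_one) auto
  then have "inverse (real n + 1) \<le> ln (real n + 1) - ln (real n)"
    using step by (simp add: ln_div field_simps)
  then show ?case using step by (simp add: harm_Suc add_ac)
qed (simp add: harm_def)

lemma sum_step_eta_sqrt_rho_le:
  assumes "T \<ge> 1"
  shows "(\<Sum>t<T. step_eta t * sqrt (momentum_rho t)) \<le> 1 + ln (real T)"
proof -
  have "step_eta t * sqrt (momentum_rho t) \<le> inverse (of_nat (Suc t))" for t
  proof -
    have "(real t + 1) powr (3/4) \<le> (real t + 2) powr (3/4)"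
      by (rule powr_mono2) auto
    then have "step_eta t * sqrt (momentum_rho t)
        \<le> 1 / ((real t + 1) powr (3/4) * (real t + 1) powr (1/4))"
      by (simp add: step_eta_def momentum_rho_def real_sqrt_divide powr_half_sqrt[symmetric] powr_powr,
          intro divide_left_mono mult_right_mono) auto
    also have "(real t + 1) powr (3/4) * (real t + 1) powr (1/4) = real t + 1"
      by (subst powr_add[symmetric]) simp
    finally show ?thesis by (simp add: inverse_eq_divide add.commute)
  qed
  then have "(\<Sum>t<T. step_eta t * sqrt (momentum_rho t)) \<le> harm T"
    unfolding harm_altdef by (intro sum_mono)
  also have "\<dots> \<le> 1 + ln (real T)"
    by (rule harm_le_one_plus_ln[OF assms])
  finally show ?thesis .
qed

lemma momentum_rho_cube_le: "(momentum_rho (Suc t)) ^ 3 \<le> 2 * (momentum_rho t - momentum_rho (Suc t))"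
proof -
  define p q where "p = sqrt (real t + 1)" and "q = sqrt (real t + 2)"
  have p0: "p > 0" and pq: "p \<le> q" and sq: "q\<^sup>2 = p\<^sup>2 + 1"
    by (simp_all add: p_def q_def)
  have q0: "q > 0" using p0 pq by linarith
  have "(q - p) * (q + p) = 1"
    using sq by (simp add: algebra_simps power2_eq_square)
  then have "1 \<le> (q - p) * (2 * q)"
    using pq mult_left_mono[of "q + p" "2 * q" "q - p"] by simp
  then have "1 / (p * q\<^sup>2) \<le> (q - p) * (2 * q) / (p * q\<^sup>2)"
    using p0 q0 by (intro divide_right_mono) auto
  also have "\<dots> = 2 * (1 / p - 1 / q)"
    using p0 q0 by (simp add: field_simps power2_eq_square)
  finally have "1 / (p * q\<^sup>2) \<le> 2 * (1 / p - 1 / q)" .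
  moreover have "1 / q ^ 3 \<le> 1 / (p * q\<^sup>2)"
    using p0 pq by (intro divide_left_mono) (auto simp: power2_eq_square power3_eq_cube)
  moreover have rho: "momentum_rho t = 1 / p" "momentum_rho (Suc t) = 1 / q"
    by (simp_all add: momentum_rho_def p_def q_def algebra_simps)
  ultimately show ?thesis
    unfolding rho power_one_over by linarith
qed

lemma sum_step_eta_sq_le: "(\<Sum>t<T. (step_eta t)\<^sup>2) \<le> 2"
proof -
  have "(\<Sum>t<T. (step_eta t)\<^sup>2) \<le> (\<Sum>t<T. 2 * (momentum_rho t - momentum_rho (Suc t)))"
    unfolding step_eta_sq by (intro sum_mono momentum_rho_cube_le)
  also have "\<dots> = 2 * (1 - momentum_rho T)"
    by (simp only: sum_distrib_left[symmetric] sum_lessThan_telescope') simp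
  also have "\<dots> \<le> 2"
    using momentum_rho_pos[of T] by simp
  finally show ?thesis .
qed

lemma momentum_rho_recursion:
  "(1 - momentum_rho (Suc t)) * momentum_rho t + (momentum_rho (Suc t))\<^sup>2 / 24 \<le> momentum_rho (Suc t)"
proof -
  define p q where "p = sqrt (real t + 1)" and "q = sqrt (real t + 2)"
  have p1: "p \<ge> 1" and pq: "p \<le> q" and sq: "q\<^sup>2 = p\<^sup>2 + 1" and q2: "sqrt 2 \<le> q"
    by (simp_all add: p_def q_def)
  have "24 / 23 \<le> sqrt (2::real)"
    by (rule real_le_rsqrt) (simp add: power2_eq_square)
  then have "1 - q + p / 24 \<le> 0"
    using pq q2 by linarith
  moreover have "p\<^sup>2 \<le> p * q"
    using pq p1 by (simp add: power2_eq_square)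
  ultimately have "q\<^sup>2 - q + p / 24 \<le> p * q"
    using sq by linarith
  then have "(q\<^sup>2 - q + p / 24) / (p * q\<^sup>2) \<le> (p * q) / (p * q\<^sup>2)"
    using p1 pq by (intro divide_right_mono) auto
  moreover have "(1 - 1 / q) * (1 / p) + (1 / q)\<^sup>2 / 24 = (q\<^sup>2 - q + p / 24) / (p * q\<^sup>2)"
    using p1 pq by (simp add: field_simps power2_eq_square)
  moreover have "(p * q) / (p * q\<^sup>2) = 1 / q"
    using p1 pq by (simp add: power2_eq_square)
  moreover have rho: "momentum_rho t = 1 / p" "momentum_rho (Suc t) = 1 / q"
    by (simp_all add: momentum_rho_def p_def q_def algebra_simps)
  ultimately show ?thesis
    unfolding rho by linarith
qed

section \<open>Second moments and independence\<close>

lemma (in prob_space) nn_integral_indep_var_le: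
  assumes indep: "indep_var N X S Y"
    and h[measurable]: "h \<in> borel_measurable (N \<Otimes>\<^sub>M S)"
    and fresh: "\<And>\<omega>. \<omega> \<in> space M \<Longrightarrow> (\<integral>\<^sup>+\<omega>'. h (X \<omega>, Y \<omega>') \<partial>M) \<le> B \<omega>"
  shows "(\<integral>\<^sup>+\<omega>. h (X \<omega>, Y \<omega>) \<partial>M) \<le> (\<integral>\<^sup>+\<omega>. B \<omega> \<partial>M)"
proof -
  have [measurable]: "X \<in> measurable M N" "Y \<in> measurable M S"
    using indep by (auto dest: indep_var_rv1 indep_var_rv2)
  interpret Y: prob_space "distr M S Y"
    by (rule prob_space_distr) simp
  have "(\<integral>\<^sup>+\<omega>. h (X \<omega>, Y \<omega>) \<partial>M) = integral\<^sup>N (distr M (N \<Otimes>\<^sub>M S) (\<lambda>\<omega>. (X \<omega>, Y \<omega>))) h"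
    by (subst nn_integral_distr) auto
  also have "\<dots> = integral\<^sup>N (distr M N X \<Otimes>\<^sub>M distr M S Y) h"
    using indep indep_var_distribution_eq by metis
  also have "\<dots> = (\<integral>\<^sup>+x. \<integral>\<^sup>+y. h (x, y) \<partial>distr M S Y \<partial>distr M N X)"
    by (rule Y.nn_integral_fst[symmetric]) simp
  also have "\<dots> = (\<integral>\<^sup>+\<omega>. \<integral>\<^sup>+\<omega>'. h (X \<omega>, Y \<omega>') \<partial>M \<partial>M)"
    by (subst nn_integral_distr) (auto intro!: nn_integral_cong Y.borel_measurable_nn_integral_fst
        simp: nn_integral_distr)
  also have "\<dots> \<le> (\<integral>\<^sup>+\<omega>. B \<omega> \<partial>M)"
    by (intro nn_integral_mono fresh)
  finally show ?thesis .
qed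

lemma (in prob_space) nn_integral_norm_sq_add_centered_le:
  fixes e :: "'a \<Rightarrow> 'v::euclidean_space"
  assumes "integrable M e" and "expectation e = 0"
    and "integrable M (\<lambda>\<omega>. (norm (e \<omega>))\<^sup>2)" and "expectation (\<lambda>\<omega>. (norm (e \<omega>))\<^sup>2) \<le> \<sigma>\<^sup>2"
  shows "(\<integral>\<^sup>+\<omega>. ennreal ((norm (a *\<^sub>R w + b *\<^sub>R e \<omega>))\<^sup>2) \<partial>M) \<le> ennreal (a\<^sup>2 * (norm w)\<^sup>2 + b\<^sup>2 * \<sigma>\<^sup>2)"
proof -
  have expand: "(norm (a *\<^sub>R w + b *\<^sub>R e \<omega>))\<^sup>2
      = a\<^sup>2 * (norm w)\<^sup>2 + (2 * a * b) * inner w (e \<omega>) + b\<^sup>2 * (norm (e \<omega>))\<^sup>2" for \<omega>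
    unfolding power2_norm_eq_inner
    by (simp add: inner_add_left inner_add_right inner_commute algebra_simps power2_eq_square)
  have int: "integrable M (\<lambda>\<omega>. inner w (e \<omega>))"
    using assms(1) by simp
  have "expectation (\<lambda>\<omega>. inner w (e \<omega>)) = 0"
    using assms(1,2) by simp
  then have "expectation (\<lambda>\<omega>. (norm (a *\<^sub>R w + b *\<^sub>R e \<omega>))\<^sup>2)
      = a\<^sup>2 * (norm w)\<^sup>2 + b\<^sup>2 * expectation (\<lambda>\<omega>. (norm (e \<omega>))\<^sup>2)"
    using int assms(3) by (simp add: expand prob_space)
  also have "\<dots> \<le> a\<^sup>2 * (norm w)\<^sup>2 + b\<^sup>2 * \<sigma>\<^sup>2"
    using assms(4) by (intro add_left_mono mult_left_mono) auto
  finally have bound: "expectation (\<lambda>\<omega>. (norm (a *\<^sub>R w + b *\<^sub>R e \<omega>))\<^sup>2) \<le> a\<^sup>2 * (norm w)\<^sup>2 + b\<^sup>2 * \<sigma>\<^sup>2" .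
  have "integrable M (\<lambda>\<omega>. (norm (a *\<^sub>R w + b *\<^sub>R e \<omega>))\<^sup>2)"
    using int assms(3) by (simp add: expand)
  then have "(\<integral>\<^sup>+\<omega>. ennreal ((norm (a *\<^sub>R w + b *\<^sub>R e \<omega>))\<^sup>2) \<partial>M)
      = ennreal (expectation (\<lambda>\<omega>. (norm (a *\<^sub>R w + b *\<^sub>R e \<omega>))\<^sup>2))"
    by (rule nn_integral_eq_integral) simp
  then show ?thesis
    using bound by (simp add: ennreal_leI del: ennreal_plus)
qed

lemma (in prob_space) expectation_le_sqrt_of_second_moment:
  fixes X :: "'a \<Rightarrow> real"
  assumes [measurable]: "X \<in> borel_measurable M" and nonneg: "\<And>\<omega>. X \<omega> \<ge> 0"
    and "c \<ge> 0" and second: "(\<integral>\<^sup>+\<omega>. ennreal ((X \<omega>)\<^sup>2) \<partial>M) \<le> ennreal c"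
  shows "integrable M X" and "expectation X \<le> sqrt c"
proof -
  have sq: "integrable M (\<lambda>\<omega>. (X \<omega>)\<^sup>2)"
    using order.strict_trans1[OF second ennreal_less_top] by (intro integrableI_nonneg) auto
  then show int: "integrable M X"
    by (rule square_integrable_imp_integrable[rotated]) simp
  have "expectation (\<lambda>\<omega>. (X \<omega>)\<^sup>2) = enn2real (\<integral>\<^sup>+\<omega>. ennreal ((X \<omega>)\<^sup>2) \<partial>M)"
    by (rule integral_eq_nn_integral) auto
  also have "\<dots> \<le> c"
    using enn2real_mono[OF second] \<open>c \<ge> 0\<close> by simp
  finally have "(expectation X)\<^sup>2 \<le> c"
    using variance_eq[OF int sq] variance_positive[of X] by linarith
  then show "expectation X \<le> sqrt c"
    by (rule real_le_rsqrt)
qed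

lemma momentum_young_ineq:
  fixes \<rho> d z w :: real
  assumes "0 < \<rho>" "\<rho> \<le> 1" and "0 \<le> w" "w \<le> d + z" and "0 \<le> d" "0 \<le> z"
  shows "(1 - \<rho>)\<^sup>2 * w\<^sup>2 \<le> (1 - \<rho>) * d\<^sup>2 + z\<^sup>2 / \<rho>"
proof -
  have "w\<^sup>2 \<le> (d + z)\<^sup>2"
    using assms by (intro power_mono) auto
  also have "\<dots> \<le> (1 + \<rho>) * d\<^sup>2 + (1 + 1 / \<rho>) * z\<^sup>2"
  proof -
    have "0 \<le> (\<rho> * d - z)\<^sup>2 / \<rho>"
      using assms by simp
    also have "\<dots> = \<rho> * d\<^sup>2 - 2 * d * z + z\<^sup>2 / \<rho>"
      using assms by (simp add: field_simps power2_eq_square)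
    finally show ?thesis by (simp add: algebra_simps power2_eq_square)
  qed
  finally have "(1 - \<rho>)\<^sup>2 * w\<^sup>2 \<le> (1 - \<rho>)\<^sup>2 * ((1 + \<rho>) * d\<^sup>2 + (1 + 1 / \<rho>) * z\<^sup>2)"
    by (intro mult_left_mono) auto
  also have "\<dots> = ((1 - \<rho>) * (1 - \<rho>\<^sup>2)) * d\<^sup>2 + ((1 - \<rho>) * (1 - \<rho>\<^sup>2)) * (z\<^sup>2 / \<rho>)"
    using assms by (simp add: field_simps power2_eq_square)
  also have "\<dots> \<le> (1 - \<rho>) * d\<^sup>2 + z\<^sup>2 / \<rho>"
  proof -
    have "(1 - \<rho>) * (1 - \<rho>\<^sup>2) \<le> 1 - \<rho>" and "1 - \<rho> \<le> 1"
      using assms by (auto simp: mult_left_le)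
    then have "((1 - \<rho>) * (1 - \<rho>\<^sup>2)) * d\<^sup>2 \<le> (1 - \<rho>) * d\<^sup>2"
      and "((1 - \<rho>) * (1 - \<rho>\<^sup>2)) * (z\<^sup>2 / \<rho>) \<le> 1 * (z\<^sup>2 / \<rho>)"
      using assms by (intro mult_right_mono; simp)+
    then show ?thesis by simp
  qed
  finally show ?thesis .
qed

section \<open>The stochastic iteration\<close>

locale bsfw_setting = smooth_fw_setting C lmo f grad L + prob_space M
  for C :: "'v::euclidean_space set" and lmo f grad L and M :: "'w measure" +
  fixes \<delta> :: real and K :: nat and minit :: 'v and \<sigma> :: real
    and S :: "'s measure" and \<xi> :: "nat \<Rightarrow> 'w \<Rightarrow> 's" and G :: "'v \<Rightarrow> 's \<Rightarrow> 'v"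
  assumes compact_C: "compact C"
    and grad_cont: "continuous_on UNIV grad"
    and lmo_measurable: "lmo \<in> borel_measurable borel"
    and \<delta>_pos: "\<delta> > 0"
    and \<xi>_measurable: "\<And>t. \<xi> t \<in> measurable M S"
    and \<xi>_indep: "indep_vars (\<lambda>_. S) \<xi> UNIV"
    and G_measurable: "(\<lambda>(x, z). G x z) \<in> borel_measurable (borel \<Otimes>\<^sub>M S)"
    and unbiased: "\<And>t x. integrable M (\<lambda>\<omega>. G x (\<xi> t \<omega>)) \<and> expectation (\<lambda>\<omega>. G x (\<xi> t \<omega>)) = grad x"
    and variance_le: "\<And>t x. integrable M (\<lambda>\<omega>. (norm (G x (\<xi> t \<omega>) - grad x))\<^sup>2)
                       \<and> expectation (\<lambda>\<omega>. (norm (G x (\<xi> t \<omega>) - grad x))\<^sup>2) \<le> \<sigma>\<^sup>2"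
begin

definition iterate :: "'w \<Rightarrow> nat \<Rightarrow> 'v \<times> 'v" where
  "iterate \<omega> t = bsfw lmo K \<delta> step_eta momentum_rho minit (\<lambda>t y. G y (\<xi> t \<omega>)) t"

definition iter_x :: "'w \<Rightarrow> nat \<Rightarrow> 'v" where
  "iter_x \<omega> t = fst (iterate \<omega> t)"

definition iter_m :: "'w \<Rightarrow> nat \<Rightarrow> 'v" where
  "iter_m \<omega> t = snd (iterate \<omega> t)"

definition est_err :: "'w \<Rightarrow> nat \<Rightarrow> real" where
  "est_err \<omega> t = norm (iter_m \<omega> t - grad (iter_x \<omega> t))"

definition next_x :: "'v \<times> 'v \<Rightarrow> nat \<Rightarrow> 'v" where
  "next_x z t = bfw_step lmo K \<delta> (step_eta t) (snd z) (fst z)"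

lemma iterate_0: "iterate \<omega> 0 = (lmo minit, 0)"
  by (simp add: iterate_def)

lemma iterate_Suc:
  "iterate \<omega> (Suc t) = (next_x (iterate \<omega> t) t,
     (1 - momentum_rho (Suc t)) *\<^sub>R iter_m \<omega> t
       + momentum_rho (Suc t) *\<^sub>R G (next_x (iterate \<omega> t) t) (\<xi> (Suc t) \<omega>))"
  by (simp add: iterate_def iter_m_def next_x_def case_prod_beta Let_def)

lemma iter_x_Suc: "iter_x \<omega> (Suc t) = bfw_step lmo K \<delta> (step_eta t) (iter_m \<omega> t) (iter_x \<omega> t)"
  by (simp add: iter_x_def iter_m_def iterate_Suc next_x_def)

lemma iter_x_in: "iter_x \<omega> t \<in> C"
  using step_eta_pos step_eta_le_one
  by (induction t) (auto simp: iter_x_def iterate_0 lmo_in iter_x_Suc[unfolded iter_x_def]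
      intro: bfw_step_in[OF _ \<delta>_pos] less_imp_le)

lemma est_err_Suc:
  "est_err \<omega> (Suc t) = norm
     ((1 - momentum_rho (Suc t)) *\<^sub>R (iter_m \<omega> t - grad (next_x (iterate \<omega> t) t))
      + momentum_rho (Suc t) *\<^sub>R
          (G (next_x (iterate \<omega> t) t) (\<xi> (Suc t) \<omega>) - grad (next_x (iterate \<omega> t) t)))"
  by (simp add: est_err_def iter_x_def iter_m_def iterate_Suc algebra_simps)

lemma measurable_grad[measurable]: "grad \<in> borel_measurable borel"
  using grad_cont by (rule borel_measurable_continuous_onI)

lemma measurable_G_comp[measurable]:
  "a \<in> borel_measurable N \<Longrightarrow> b \<in> measurable N S \<Longrightarrow> (\<lambda>p. G (a p) (b p)) \<in> borel_measurable N"
  by (rule measurable_curried_app[OF G_measurable])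

lemma measurable_next_x[measurable]: "(\<lambda>z. next_x z t) \<in> borel_measurable (borel \<Otimes>\<^sub>M borel)"
  unfolding next_x_def by (rule measurable_bfw_step[OF lmo_measurable]) measurable

lemma measurable_iterate_prefix:
  "{..t} \<subseteq> I \<Longrightarrow> (\<lambda>h. bsfw lmo K \<delta> step_eta momentum_rho minit (\<lambda>t y. G y (h t)) t)
     \<in> measurable (Pi\<^sub>M I (\<lambda>_. S)) (borel \<Otimes>\<^sub>M borel)"
  by (rule measurable_bsfw[OF lmo_measurable G_measurable])

lemma measurable_iterate[measurable]: "(\<lambda>\<omega>. iterate \<omega> t) \<in> measurable M (borel \<Otimes>\<^sub>M borel)"
proof -
  have "(\<lambda>\<omega> i. \<xi> i \<omega>) \<in> measurable M (Pi\<^sub>M UNIV (\<lambda>_. S))"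
    by (rule measurable_PiM_single') (auto intro: measurable_space[OF \<xi>_measurable] \<xi>_measurable)
  from measurable_comp[OF this measurable_iterate_prefix[of t UNIV]] show ?thesis
    by (simp add: iterate_def comp_def)
qed

lemma measurable_iter_x[measurable]: "(\<lambda>\<omega>. iter_x \<omega> t) \<in> borel_measurable M"
  unfolding iter_x_def by measurable

lemma measurable_iter_m[measurable]: "(\<lambda>\<omega>. iter_m \<omega> t) \<in> borel_measurable M"
  unfolding iter_m_def by measurable

lemma measurable_est_err[measurable]: "(\<lambda>\<omega>. est_err \<omega> t) \<in> borel_measurable M"
  unfolding est_err_def by measurable

text \<open>The iterate after \<open>t\<close> steps depends only on \<open>\<xi> 0, \<dots>, \<xi> t\<close>, so \<open>\<xi> (Suc t)\<close> acts as a fresh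
  sample.\<close>
lemma nn_integral_next_sample_le:
  assumes [measurable]: "H \<in> borel_measurable ((borel \<Otimes>\<^sub>M borel) \<Otimes>\<^sub>M S)"
    and fresh: "\<And>\<omega>. (\<integral>\<^sup>+\<omega>'. H (iterate \<omega> t, \<xi> (Suc t) \<omega>') \<partial>M) \<le> B \<omega>"
  shows "(\<integral>\<^sup>+\<omega>. H (iterate \<omega> t, \<xi> (Suc t) \<omega>) \<partial>M) \<le> (\<integral>\<^sup>+\<omega>. B \<omega> \<partial>M)"
proof -
  define past where "past \<omega> = restrict (\<lambda>i. \<xi> i \<omega>) {..t}" for \<omega>
  define next_sample where "next_sample \<omega> = restrict (\<lambda>i. \<xi> i \<omega>) {Suc t}" for \<omega>
  define state where "state h = bsfw lmo K \<delta> step_eta momentum_rho minit (\<lambda>t y. G y (h t)) t" for h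
  have state: "state (past \<omega>) = iterate \<omega> t" for \<omega>
    unfolding state_def past_def iterate_def by (intro bsfw_cong) auto
  have [measurable]: "state \<in> measurable (Pi\<^sub>M {..t} (\<lambda>_. S)) (borel \<Otimes>\<^sub>M borel)"
    unfolding state_def by (rule measurable_iterate_prefix) simp
  have [measurable]: "(\<lambda>h. h (Suc t)) \<in> measurable (Pi\<^sub>M {Suc t} (\<lambda>_. S)) S"
    by measurable
  have "indep_var (Pi\<^sub>M {..t} (\<lambda>_. S)) past (Pi\<^sub>M {Suc t} (\<lambda>_. S)) next_sample"
    unfolding past_def next_sample_def by (rule indep_var_restrict[OF \<xi>_indep]) auto
  from nn_integral_indep_var_le[OF this, of "\<lambda>(h, h'). H (state h, h' (Suc t))"] show ?thesis
    by (simp add: state fresh next_sample_def)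
qed

lemma next_x_iterate: "next_x (iterate \<omega> t) t = iter_x \<omega> (Suc t)"
  by (simp add: iter_x_def iterate_Suc)

lemma iter_x_Suc_dist_le: "norm (iter_x \<omega> (Suc t) - iter_x \<omega> t) \<le> step_eta t * diameter C"
proof -
  have "norm (iter_x \<omega> (Suc t) - iter_x \<omega> t)
      \<le> step_eta t * norm (lmo (iter_m \<omega> t) - iter_x \<omega> t)"
    unfolding iter_x_Suc
    by (simp add: bfw_step_dist_le iter_x_in \<delta>_pos less_imp_le[OF step_eta_pos] step_eta_le_one)
  also have "\<dots> \<le> step_eta t * diameter C"
    using dist_le_diameter[OF lmo_in iter_x_in] step_eta_pos[of t] by simp
  finally show ?thesis .
qed

lemma grad_iter_x_Suc_dist_le:
  "norm (grad (iter_x \<omega> t) - grad (iter_x \<omega> (Suc t))) \<le> L * step_eta t * diameter C"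
proof -
  have "norm (grad (iter_x \<omega> t) - grad (iter_x \<omega> (Suc t)))
      \<le> L * norm (iter_x \<omega> (Suc t) - iter_x \<omega> t)"
    using grad_lipschitz[OF iter_x_in iter_x_in, of \<omega> t \<omega> "Suc t"] by (simp add: norm_minus_commute)
  also have "\<dots> \<le> L * (step_eta t * diameter C)"
    by (rule mult_left_mono[OF iter_x_Suc_dist_le L_nonneg])
  finally show ?thesis by (simp add: mult.assoc)
qed

lemma est_err_Suc_sq_le:
  fixes t :: nat
  defines "\<rho> \<equiv> momentum_rho (Suc t)" and "D \<equiv> diameter C"
  shows "(\<integral>\<^sup>+\<omega>. ennreal ((est_err \<omega> (Suc t))\<^sup>2) \<partial>M)
           \<le> (\<integral>\<^sup>+\<omega>. ennreal ((1 - \<rho>) * (est_err \<omega> t)\<^sup>2 + \<rho>\<^sup>2 * (L\<^sup>2 * D\<^sup>2 + \<sigma>\<^sup>2)) \<partial>M)"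
proof -
  have \<rho>: "0 < \<rho>" "\<rho> \<le> 1"
    by (simp_all add: \<rho>_def momentum_rho_pos momentum_rho_le_one)
  define H where "H = (\<lambda>(z, s). ennreal ((norm ((1 - \<rho>) *\<^sub>R (snd z - grad (next_x z t))
      + \<rho> *\<^sub>R (G (next_x z t) s - grad (next_x z t))))\<^sup>2))"
  have [measurable]: "H \<in> borel_measurable ((borel \<Otimes>\<^sub>M borel) \<Otimes>\<^sub>M S)"
    unfolding H_def by measurable
  have "(\<integral>\<^sup>+\<omega>'. H (iterate \<omega> t, \<xi> (Suc t) \<omega>') \<partial>M)
      \<le> ennreal ((1 - \<rho>) * (est_err \<omega> t)\<^sup>2 + \<rho>\<^sup>2 * (L\<^sup>2 * D\<^sup>2 + \<sigma>\<^sup>2))" for \<omega>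
  proof -
    define y where "y = iter_x \<omega> (Suc t)"
    define w where "w = iter_m \<omega> t - grad y"
    have "(\<integral>\<^sup>+\<omega>'. H (iterate \<omega> t, \<xi> (Suc t) \<omega>') \<partial>M)
        = (\<integral>\<^sup>+\<omega>'. ennreal ((norm ((1 - \<rho>) *\<^sub>R w + \<rho> *\<^sub>R (G y (\<xi> (Suc t) \<omega>') - grad y)))\<^sup>2) \<partial>M)"
      by (simp add: H_def w_def y_def iter_m_def next_x_iterate)
    also have "\<dots> \<le> ennreal ((1 - \<rho>)\<^sup>2 * (norm w)\<^sup>2 + \<rho>\<^sup>2 * \<sigma>\<^sup>2)"
      using unbiased[of y "Suc t"] variance_le[of y "Suc t"]
      by (intro nn_integral_norm_sq_add_centered_le) (auto simp: prob_space)
    also have "(1 - \<rho>)\<^sup>2 * (norm w)\<^sup>2 + \<rho>\<^sup>2 * \<sigma>\<^sup>2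
        \<le> (1 - \<rho>) * (est_err \<omega> t)\<^sup>2 + \<rho>\<^sup>2 * (L\<^sup>2 * D\<^sup>2 + \<sigma>\<^sup>2)"
    proof -
      have "norm w \<le> est_err \<omega> t + L * step_eta t * D"
        using norm_triangle_ineq[of "iter_m \<omega> t - grad (iter_x \<omega> t)" "grad (iter_x \<omega> t) - grad y"]
          grad_iter_x_Suc_dist_le[of \<omega> t]
        by (simp add: w_def y_def est_err_def D_def)
      then have "(1 - \<rho>)\<^sup>2 * (norm w)\<^sup>2 \<le> (1 - \<rho>) * (est_err \<omega> t)\<^sup>2 + (L * step_eta t * D)\<^sup>2 / \<rho>"
        using L_nonneg step_eta_pos[of t] diameter_ge_0[OF bounded_C]
        by (intro momentum_young_ineq[OF \<rho> norm_ge_zero]) (auto simp: D_def est_err_def)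
      also have "(L * step_eta t * D)\<^sup>2 / \<rho> = (L\<^sup>2 * D\<^sup>2) * ((step_eta t)\<^sup>2 / \<rho>)"
        by (simp add: power_mult_distrib)
      also have "(step_eta t)\<^sup>2 / \<rho> = \<rho>\<^sup>2"
        using \<rho> unfolding step_eta_sq \<rho>_def[symmetric] by (simp add: power2_eq_square power3_eq_cube)
      finally show ?thesis
        by (simp add: algebra_simps)
    qed
    finally show ?thesis
      by (simp add: ennreal_leI del: ennreal_plus)
  qed
  then have "(\<integral>\<^sup>+\<omega>. H (iterate \<omega> t, \<xi> (Suc t) \<omega>) \<partial>M)
      \<le> (\<integral>\<^sup>+\<omega>. ennreal ((1 - \<rho>) * (est_err \<omega> t)\<^sup>2 + \<rho>\<^sup>2 * (L\<^sup>2 * D\<^sup>2 + \<sigma>\<^sup>2)) \<partial>M)"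
    by (rule nn_integral_next_sample_le[rotated]) measurable
  then show ?thesis
    by (simp add: H_def est_err_Suc \<rho>_def iter_m_def)
qed

lemma est_err_0: "est_err \<omega> 0 = norm (grad (lmo minit))"
  by (simp add: est_err_def iter_x_def iter_m_def iterate_0)

text \<open>\<open>V\<close> plays the role of \<open>M\<^sub>h\<close>.\<close>
lemma est_err_sq_le:
  assumes init: "(norm (grad (lmo minit)))\<^sup>2 \<le> V"
    and noise: "24 * (\<sigma>\<^sup>2 + L\<^sup>2 * (diameter C)\<^sup>2) \<le> V"
  shows "(\<integral>\<^sup>+\<omega>. ennreal ((est_err \<omega> t)\<^sup>2) \<partial>M) \<le> ennreal (V * momentum_rho t)"
proof (induction t)
  case 0
  show ?case
    using init by (simp add: est_err_0 emeasure_space_1 ennreal_leI)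
next
  case (Suc t)
  define \<rho> where "\<rho> = momentum_rho (Suc t)"
  define c where "c = \<rho>\<^sup>2 * (L\<^sup>2 * (diameter C)\<^sup>2 + \<sigma>\<^sup>2)"
  have \<rho>: "0 < \<rho>" "\<rho> \<le> 1"
    by (simp_all add: \<rho>_def momentum_rho_pos momentum_rho_le_one)
  have V0: "0 \<le> V"
    using init zero_le_power2 order_trans by blast
  have "(\<integral>\<^sup>+\<omega>. ennreal ((est_err \<omega> (Suc t))\<^sup>2) \<partial>M)
      \<le> (\<integral>\<^sup>+\<omega>. ennreal (1 - \<rho>) * ennreal ((est_err \<omega> t)\<^sup>2) + ennreal c \<partial>M)"
    using est_err_Suc_sq_le[of t] \<rho>
    by (simp add: \<rho>_def[symmetric] c_def ennreal_mult[symmetric] ennreal_plus[symmetric] del: ennreal_plus)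
  also have "\<dots> = ennreal (1 - \<rho>) * (\<integral>\<^sup>+\<omega>. ennreal ((est_err \<omega> t)\<^sup>2) \<partial>M) + ennreal c"
    by (simp add: nn_integral_add nn_integral_cmult emeasure_space_1)
  also have "\<dots> \<le> ennreal (1 - \<rho>) * ennreal (V * momentum_rho t) + ennreal c"
    by (intro add_mono mult_left_mono Suc.IH) auto
  also have "\<dots> = ennreal ((1 - \<rho>) * (V * momentum_rho t) + c)"
    using \<rho> V0 momentum_rho_pos[of t] by (simp add: c_def ennreal_mult ennreal_plus)
  also have "(1 - \<rho>) * (V * momentum_rho t) + c \<le> V * \<rho>"
  proof -
    have "c \<le> \<rho>\<^sup>2 * (V / 24)"
      using noise unfolding c_def by (intro mult_left_mono) auto
    moreover have "V * ((1 - \<rho>) * momentum_rho t + \<rho>\<^sup>2 / 24) \<le> V * \<rho>"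
      using momentum_rho_recursion[of t] V0 by (simp add: \<rho>_def mult_left_mono)
    ultimately show ?thesis
      by (simp add: algebra_simps)
  qed
  finally show ?case
    by (simp add: \<rho>_def ennreal_leI)
qed

lemma
  assumes "(norm (grad (lmo minit)))\<^sup>2 \<le> V" and "24 * (\<sigma>\<^sup>2 + L\<^sup>2 * (diameter C)\<^sup>2) \<le> V"
  shows integrable_est_err: "integrable M (\<lambda>\<omega>. est_err \<omega> t)"
    and expectation_est_err_le: "expectation (\<lambda>\<omega>. est_err \<omega> t) \<le> sqrt V * sqrt (momentum_rho t)"
proof -
  have "0 \<le> V * momentum_rho t"
    using order_trans[OF zero_le_power2 assms(1)] momentum_rho_pos[of t] by simp
  note second = expectation_le_sqrt_of_second_moment[OF _ _ this est_err_sq_le[OF assms]]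
  show "integrable M (\<lambda>\<omega>. est_err \<omega> t)"
    by (rule second(1)) (auto simp: est_err_def)
  show "expectation (\<lambda>\<omega>. est_err \<omega> t) \<le> sqrt V * sqrt (momentum_rho t)"
    using second(2) by (auto simp: est_err_def real_sqrt_mult)
qed

definition min_gap :: "nat \<Rightarrow> 'w \<Rightarrow> real" where
  "min_gap T \<omega> = Min ((\<lambda>t. fw_gap C grad (iter_x \<omega> t)) ` {0..<T})"

lemma measurable_min_gap[measurable]: "min_gap T \<in> borel_measurable M"
proof -
  note lmo_measurable[measurable]
  show ?thesis
    unfolding min_gap_def[abs_def] fw_gap_eq by measurable
qed

lemma min_gap_le: "t < T \<Longrightarrow> min_gap T \<omega> \<le> fw_gap C grad (iter_x \<omega> t)"
  by (simp add: min_gap_def)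

lemma min_gap_attained:
  assumes "T \<ge> 1"
  obtains t where "t < T" "min_gap T \<omega> = fw_gap C grad (iter_x \<omega> t)" "0 \<le> min_gap T \<omega>"
proof -
  have "min_gap T \<omega> \<in> (\<lambda>t. fw_gap C grad (iter_x \<omega> t)) ` {0..<T}"
    unfolding min_gap_def using assms by (intro Min_in) auto
  then show thesis
    using that fw_gap_nonneg[OF iter_x_in] by auto
qed

lemma integrable_min_gap:
  assumes "T \<ge> 1"
  shows "integrable M (min_gap T)"
proof -
  have "compact (grad ` C)"
    using compact_C grad_cont by (auto intro: compact_continuous_image continuous_on_subset)
  then obtain B where B: "\<And>x. x \<in> C \<Longrightarrow> norm (grad x) \<le> B"
    by (meson compact_imp_bounded bounded_iff image_eqI)
  have "fw_gap C grad x \<le> B * diameter C" if "x \<in> C" for x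
  proof -
    have "fw_gap C grad x \<le> norm (grad x) * norm (x - lmo (grad x))"
      unfolding fw_gap_eq by (rule norm_cauchy_schwarz)
    also have "\<dots> \<le> B * diameter C"
      using B[OF that] dist_le_diameter[OF that lmo_in] order_trans[OF norm_ge_zero B[OF that]]
      by (intro mult_mono) auto
    finally show ?thesis .
  qed
  then have "norm (min_gap T \<omega>) \<le> B * diameter C" for \<omega>
    using min_gap_attained[OF assms, of \<omega>] iter_x_in by (metis real_norm_def abs_of_nonneg)
  then show ?thesis
    by (intro integrable_const_bound[where B = "B * diameter C"]) auto
qed

lemma f_inf_le:
  assumes "x \<in> C"
  shows "(INF y\<in>C. f y) \<le> f x"
proof -
  have "continuous_on C f"
    using has_grad has_derivative_continuous by (blast intro: continuous_at_imp_continuous_on)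
  then have "bdd_below (f ` C)"
    using compact_C by (intro bounded_imp_bdd_below compact_imp_bounded compact_continuous_image)
  then show ?thesis
    using assms by (rule cINF_lower)
qed

lemma sum_step_eta_min_gap_le:
  "(\<Sum>t<T. step_eta t) * min_gap T \<omega>
     \<le> f (lmo minit) - (INF y\<in>C. f y)
       + (\<Sum>t<T. 2 * step_eta t * diameter C * est_err \<omega> t) + L / 2 * (diameter C)\<^sup>2 * (\<Sum>t<T. (step_eta t)\<^sup>2)"
proof -
  have "(\<Sum>t<T. step_eta t) * min_gap T \<omega> \<le> (\<Sum>t<T. step_eta t * fw_gap C grad (iter_x \<omega> t))"
    unfolding sum_distrib_right using min_gap_le step_eta_pos
    by (intro sum_mono mult_left_mono) (auto simp: less_imp_le)
  also have "\<dots> \<le> f (iter_x \<omega> 0) - f (iter_x \<omega> T)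
      + (\<Sum>t<T. 2 * step_eta t * diameter C * est_err \<omega> t + L / 2 * (step_eta t)\<^sup>2 * (diameter C)\<^sup>2)"
    unfolding est_err_def
    by (rule sum_weighted_gap_le[where x = "iter_x \<omega>" and m = "iter_m \<omega>" and \<delta> = \<delta>])
      (simp_all add: iter_x_in iter_x_Suc \<delta>_pos less_imp_le[OF step_eta_pos] step_eta_le_one)
  also have "f (iter_x \<omega> 0) - f (iter_x \<omega> T) \<le> f (lmo minit) - (INF y\<in>C. f y)"
    using f_inf_le[OF iter_x_in] by (simp add: iter_x_def iterate_0)
  also have "(\<Sum>t<T. 2 * step_eta t * diameter C * est_err \<omega> t + L / 2 * (step_eta t)\<^sup>2 * (diameter C)\<^sup>2)
      = (\<Sum>t<T. 2 * step_eta t * diameter C * est_err \<omega> t) + L / 2 * (diameter C)\<^sup>2 * (\<Sum>t<T. (step_eta t)\<^sup>2)"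
    by (simp add: sum.distrib sum_distrib_left mult_ac)
  finally show ?thesis
    by simp
qed

lemma sum_step_eta_expectation_min_gap_le:
  assumes T: "T \<ge> 1"
    and init: "(norm (grad (lmo minit)))\<^sup>2 \<le> V" and noise: "24 * (\<sigma>\<^sup>2 + L\<^sup>2 * (diameter C)\<^sup>2) \<le> V"
  defines "D \<equiv> diameter C"
  shows "(\<Sum>t<T. step_eta t) * expectation (min_gap T)
           \<le> f (lmo minit) - (INF y\<in>C. f y) + 2 * D * sqrt V * (1 + ln (real T)) + L * D\<^sup>2"
proof -
  note err = integrable_est_err[OF init noise] expectation_est_err_le[OF init noise]
  have D: "D \<ge> 0"
    by (simp add: D_def diameter_ge_0 bounded_C)
  have V: "V \<ge> 0"
    using order_trans[OF zero_le_power2 init] .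
  have "(\<Sum>t<T. step_eta t) * expectation (min_gap T)
      = expectation (\<lambda>\<omega>. (\<Sum>t<T. step_eta t) * min_gap T \<omega>)"
    by simp
  also have "\<dots> \<le> expectation (\<lambda>\<omega>. f (lmo minit) - (INF y\<in>C. f y)
      + (\<Sum>t<T. 2 * step_eta t * D * est_err \<omega> t) + L / 2 * D\<^sup>2 * (\<Sum>t<T. (step_eta t)\<^sup>2))"
    using integrable_min_gap[OF T] err(1) sum_step_eta_min_gap_le
    by (intro integral_mono) (auto simp: D_def)
  also have "\<dots> = f (lmo minit) - (INF y\<in>C. f y)
      + (\<Sum>t<T. 2 * step_eta t * D * expectation (\<lambda>\<omega>. est_err \<omega> t)) + L / 2 * D\<^sup>2 * (\<Sum>t<T. (step_eta t)\<^sup>2)"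
    using err(1) by (simp add: prob_space)
  also have "(\<Sum>t<T. 2 * step_eta t * D * expectation (\<lambda>\<omega>. est_err \<omega> t))
      \<le> 2 * D * sqrt V * (\<Sum>t<T. step_eta t * sqrt (momentum_rho t))"
    unfolding sum_distrib_left
    using err(2) step_eta_pos D by (intro sum_mono) (simp add: mult_left_mono mult_ac)
  also have "\<dots> \<le> 2 * D * sqrt V * (1 + ln (real T))"
    using sum_step_eta_sqrt_rho_le[OF T] D V by (intro mult_left_mono) auto
  also have "L / 2 * D\<^sup>2 * (\<Sum>t<T. (step_eta t)\<^sup>2) \<le> L / 2 * D\<^sup>2 * 2"
    using sum_step_eta_sq_le L_nonneg by (intro mult_left_mono) auto
  finally show ?thesis
    by simp
qed

lemma expectation_min_gap_le:
  assumes T: "T \<ge> 1"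
    and init: "(norm (grad (lmo minit)))\<^sup>2 \<le> V" and noise: "24 * (\<sigma>\<^sup>2 + L\<^sup>2 * (diameter C)\<^sup>2) \<le> V"
  defines "D \<equiv> diameter C"
  shows "expectation (min_gap T)
           \<le> (f (lmo minit) - (INF y\<in>C. f y) + 2 * D * sqrt V * (1 + ln (real T)) + L * D\<^sup>2)
             / (4 * ((real T + 2) powr (1/4) - 2 powr (1/4)))"
proof -
  define N where "N = f (lmo minit) - (INF y\<in>C. f y) + 2 * D * sqrt V * (1 + ln (real T)) + L * D\<^sup>2"
  define den where "den = 4 * ((real T + 2) powr (1/4) - 2 powr (1/4))"
  have den: "0 < den" "den \<le> (\<Sum>t<T. step_eta t)"
    using T sum_step_eta_ge[of T] by (auto simp: den_def powr_less_mono2)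
  have "0 \<le> N"
    using f_inf_le[OF lmo_in] L_nonneg T order_trans[OF zero_le_power2 init]
    by (simp add: N_def D_def diameter_ge_0 bounded_C)
  have "expectation (min_gap T) \<le> N / (\<Sum>t<T. step_eta t)"
    using sum_step_eta_expectation_min_gap_le[OF T init noise] den
    by (simp add: N_def D_def pos_le_divide_eq mult.commute)
  also have "\<dots> \<le> N / den"
    using \<open>0 \<le> N\<close> den by (intro divide_left_mono) auto
  finally show ?thesis
    by (simp add: N_def den_def)
qed

end

lemma diameter_eq_0_of_neg_lipschitz:
  fixes g :: "'a::real_normed_vector \<Rightarrow> 'b::real_normed_vector"
  assumes "L < 0" and "\<And>x y. x \<in> C \<Longrightarrow> y \<in> C \<Longrightarrow> norm (g x - g y) \<le> L * norm (x - y)"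
  shows "diameter C = 0"
proof -
  have "x = y" if "x \<in> C" "y \<in> C" for x y
  proof -
    have "0 \<le> L * norm (x - y)"
      using assms(2)[OF that] norm_ge_zero order_trans by blast
    then show "x = y"
      using \<open>L < 0\<close> by (simp add: zero_le_mult_iff)
  qed
  then have "C = {} \<or> (\<exists>a. C = {a})"
    by blast
  then show ?thesis
    by auto
qed

theorem theorem15:
  fixes C :: "'v::euclidean_space set"
    and f :: "'v \<Rightarrow> real" and grad :: "'v \<Rightarrow> 'v"
    and L \<sigma> \<delta> :: real and K T :: nat and minit :: 'v
    and lmo :: "'v \<Rightarrow> 'v"
    and M :: "'w measure" and S :: "'s measure"
    and \<xi> :: "nat \<Rightarrow> 'w \<Rightarrow> 's" and G :: "'v \<Rightarrow> 's \<Rightarrow> 'v"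
  assumes C: "compact C" "convex C" "C \<noteq> {}"
    and deriv: "\<And>x. (f has_derivative (\<lambda>h. inner (grad x) h)) (at x)"
    and grad_cont: "continuous_on UNIV grad"
    and lipschitz: "\<forall>x\<in>C. \<forall>y\<in>C. norm (grad x - grad y) \<le> L * norm (x - y)"
    and lmo: "\<And>v. lmo v \<in> C \<and> (\<forall>s\<in>C. inner (lmo v) v \<le> inner s v)"
    and lmo_meas: "lmo \<in> borel_measurable borel"
    and K: "K \<ge> 1" and \<delta>: "0 < \<delta>" "\<delta> \<le> 1"
    and T: "T \<ge> 1"
    and P: "prob_space M"
    and \<xi>_meas: "\<And>t. \<xi> t \<in> measurable M S"
    and \<xi>_indep: "prob_space.indep_vars M (\<lambda>_. S) \<xi> UNIV"
    and G_meas: "(\<lambda>(x, z). G x z) \<in> borel_measurable (borel \<Otimes>\<^sub>M S)"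
    and unbiased: "\<And>t x. integrable M (\<lambda>\<omega>. G x (\<xi> t \<omega>))
                      \<and> prob_space.expectation M (\<lambda>\<omega>. G x (\<xi> t \<omega>)) = grad x"
    and variance: "\<And>t x. integrable M (\<lambda>\<omega>. (norm (G x (\<xi> t \<omega>) - grad x))\<^sup>2)
                      \<and> prob_space.expectation M (\<lambda>\<omega>. (norm (G x (\<xi> t \<omega>) - grad x))\<^sup>2) \<le> \<sigma>\<^sup>2"
  shows
    "let D = diameter C;
         fstar = (INF x\<in>C. f x);
         eta = (\<lambda>t::nat. 1 / (real t + 2) powr (3/4));
         rho = (\<lambda>t::nat. 1 / sqrt (real t + 1));
         x = (\<lambda>\<omega> t. fst (bsfw lmo K \<delta> eta rho minit (\<lambda>t y. G y (\<xi> t \<omega>)) t));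
         x0 = lmo minit;
         m0 = (0::'v);
         F0 = f x0 - fstar;
         Mh = max ((norm (m0 - grad x0))\<^sup>2) (24 * (\<sigma>\<^sup>2 + 2 * L\<^sup>2 * D\<^sup>2));
         mingap = (\<lambda>\<omega>. Min ((\<lambda>t. fw_gap C grad (x \<omega> t)) ` {0..<T}))
     in integrable M mingap \<and>
        prob_space.expectation M mingap
          \<le> (F0 + 2 * D * sqrt Mh * (1 + ln (real T)) + L * D\<^sup>2)
              / (4 * ((real T + 2) powr (1/4) - 2 powr (1/4)))"
proof -
  txt \<open>The statement allows \<open>L < 0\<close>, in which case \<open>C\<close>
    has at most one point, so \<open>max L 0\<close> can replace \<open>L\<close>.\<close>
  define L' where "L' = max L 0"
  interpret bsfw_setting C lmo f grad L' M \<delta> K minit \<sigma> S \<xi> G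
  proof (intro bsfw_setting.intro smooth_fw_setting.intro fw_setting.intro
      smooth_fw_setting_axioms.intro bsfw_setting_axioms.intro P)
    show "norm (grad x - grad y) \<le> L' * norm (x - y)" if "x \<in> C" "y \<in> C" for x y
      using lipschitz that mult_right_mono[of L L' "norm (x - y)"] by (fastforce simp: L'_def)
  qed (use assms compact_imp_bounded[OF C(1)] in \<open>auto simp: L'_def\<close>)
  have L': "L' * (diameter C)\<^sup>2 = L * (diameter C)\<^sup>2"
    using diameter_eq_0_of_neg_lipschitz[of L C grad] lipschitz by (cases "L < 0") (auto simp: L'_def)
  define Mh where "Mh = max ((norm (0 - grad (lmo minit)))\<^sup>2) (24 * (\<sigma>\<^sup>2 + 2 * L\<^sup>2 * (diameter C)\<^sup>2))"
  have "L'\<^sup>2 * (diameter C)\<^sup>2 \<le> 2 * L\<^sup>2 * (diameter C)\<^sup>2"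
    by (cases "L < 0") (auto simp: L'_def mult_right_mono)
  then have "(norm (grad (lmo minit)))\<^sup>2 \<le> Mh" "24 * (\<sigma>\<^sup>2 + L'\<^sup>2 * (diameter C)\<^sup>2) \<le> Mh"
    by (auto simp: Mh_def)
  note bound = integrable_min_gap[OF T] expectation_min_gap_le[OF T this, unfolded L']
  have "step_eta = (\<lambda>t. 1 / (real t + 2) powr (3/4))" "momentum_rho = (\<lambda>t. 1 / sqrt (real t + 1))"
    by (simp_all add: fun_eq_iff step_eta_def momentum_rho_def)
  then show ?thesis
    using bound by (simp add: Let_def min_gap_def[abs_def] iter_x_def iterate_def Mh_def)
qed

end
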